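(* Let $G$ be a compact Abelian group with a continuous length function $l$, and let $(H_n)_{n\in\mathbb{N}}$ be closed subgroups of $G$ converging to $G$ for the Hausdorff distance of $d_l(g,g')=l(g^{-1}g')$. For each $n$ let $J_n\subseteq\widehat G$ be the annihilator of $H_n$. Let $F$ be a finite subset of $\widehat G\setminus\{1\}$. Then there exists $N\in\mathbb{N}$ such that $J_n\cap F=\varnothing$ for all $n\ge N$.
   Context: A length function: $l\ge0$, $l(g)=0$ iff $g$ is the unit, symmetric, subadditive. $1$ denotes the trivial character. *)

theory Defs
  imports "HOL-Analysis.Analysis"
begin

text \<open>Abelian groups are written additively: the unit is 0, g^{-1} g' is (-g) + g'.\<close>

definition length_function :: "('a::ab_group_add \<Rightarrow> real) \<Rightarrow> bool" where
  "length_function l \<longleftrightarrow>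
     (\<forall>g. 0 \<le> l g) \<and> (\<forall>g. l g = 0 \<longleftrightarrow> g = 0) \<and> (\<forall>g. l (- g) = l g) \<and>
     (\<forall>g h. l (g + h) \<le> l g + l h)"

definition dist_l :: "('a::ab_group_add \<Rightarrow> real) \<Rightarrow> 'a \<Rightarrow> 'a \<Rightarrow> real" where
  "dist_l l g g' = l (- g + g')"

definition hausdorff_dist_l :: "('a::ab_group_add \<Rightarrow> real) \<Rightarrow> 'a set \<Rightarrow> 'a set \<Rightarrow> real" where
  "hausdorff_dist_l l A B =
     max (SUP a\<in>A. INF b\<in>B. dist_l l a b) (SUP b\<in>B. INF a\<in>A. dist_l l a b)"

definition is_subgroup :: "'a::ab_group_add set \<Rightarrow> bool" where
  "is_subgroup H \<longleftrightarrow> 0 \<in> H \<and> (\<forall>x\<in>H. \<forall>y\<in>H. x + y \<in> H) \<and> (\<forall>x\<in>H. - x \<in> H)"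

definition is_character :: "('a::{topological_space, ab_group_add} \<Rightarrow> complex) \<Rightarrow> bool" where
  "is_character c \<longleftrightarrow> continuous_on UNIV c \<and> (\<forall>g. cmod (c g) = 1) \<and>
     (\<forall>g h. c (g + h) = c g * c h)"

definition dual_group :: "('a::{topological_space, ab_group_add} \<Rightarrow> complex) set" where
  "dual_group = {c. is_character c}"

definition annihilator :: "'a::{topological_space, ab_group_add} set \<Rightarrow> ('a \<Rightarrow> complex) set" where
  "annihilator H = {c \<in> dual_group. \<forall>h\<in>H. c h = 1}"

end

theory Submission
  imports Defs
begin

text \<open>
  A nontrivial character c takes a value c g \<noteq> 1. On a compact group a continuous length
  function is small only near 0, so by continuity of c there is \<delta> > 0 with c x \<noteq> c g whenever
  l x < \<delta>. If H is \<delta>-dense, some a \<in> H has l (-a + g) < \<delta>, hence c a = c g / c (-a + g) \<noteq> 1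
  and c does not annihilate H. The subgroups H n are eventually \<delta>-dense for each of the
  finitely many characters in F.
\<close>

lemma character_zero:
  assumes "is_character c"
  shows "c 0 = 1"
proof -
  have "cmod (c 0) = 1" and "c (0 + 0) = c 0 * c 0"
    using assms unfolding is_character_def by blast+
  then show ?thesis by auto
qed

lemma compact_space_small_values_in_open:
  fixes f :: "'a::topological_space \<Rightarrow> real"
  assumes "compact (UNIV :: 'a set)" and "continuous_on UNIV f"
    and "open U" and "\<And>x. x \<notin> U \<Longrightarrow> 0 < f x"
  obtains \<delta> where "0 < \<delta>" and "\<And>x. f x < \<delta> \<Longrightarrow> x \<in> U"
proof (cases "U = UNIV")
  case True
  then show ?thesis by (intro that[of 1]) auto
next
  case False
  have "compact (- U)"
    using assms(1,3) compact_Int_closed[of UNIV "- U"] by (simp add: closed_Compl)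
  then obtain y where "y \<notin> U" and y_min: "\<And>x. x \<notin> U \<Longrightarrow> f y \<le> f x"
    using continuous_attains_inf[of "- U" f] continuous_on_subset[OF assms(2)] False by blast
  show ?thesis
  proof (rule that)
    show "0 < f y" using \<open>y \<notin> U\<close> assms(4) by blast
    show "x \<in> U" if "f x < f y" for x using that y_min by force
  qed
qed

lemma hausdorff_dist_l_less_imp_close:
  fixes l :: "'a::ab_group_add \<Rightarrow> real"
  assumes l_nonneg: "\<And>x. 0 \<le> l x" and l_bdd: "bdd_above (range l)"
    and "A \<noteq> {}" and "b \<in> B" and "hausdorff_dist_l l A B < \<delta>"
  shows "\<exists>a\<in>A. dist_l l a b < \<delta>"
proof -
  obtain a0 where "a0 \<in> A" using \<open>A \<noteq> {}\<close> by blast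
  have bdd_below: "bdd_below ((\<lambda>a. dist_l l a b') ` A)" for b'
    unfolding dist_l_def using l_nonneg by (meson bdd_belowI2)
  have "(INF a\<in>A. dist_l l a b') \<le> dist_l l a0 b'" for b'
    by (rule cINF_lower[OF bdd_below \<open>a0 \<in> A\<close>])
  then have "bdd_above ((\<lambda>b'. INF a\<in>A. dist_l l a b') ` B)"
    using l_bdd unfolding dist_l_def
    by (metis (no_types, lifting) bdd_above.I2 bdd_above.E rangeI order_trans)
  then have "(INF a\<in>A. dist_l l a b) \<le> (SUP b'\<in>B. INF a\<in>A. dist_l l a b')"
    by (rule cSUP_upper[OF \<open>b \<in> B\<close>])
  also have "\<dots> \<le> hausdorff_dist_l l A B"
    unfolding hausdorff_dist_l_def by simp
  finally have "(INF a\<in>A. dist_l l a b) < \<delta>"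
    using assms(5) by simp
  then show ?thesis
    by (simp add: cINF_less_iff[OF \<open>A \<noteq> {}\<close> bdd_below])
qed

lemma nontrivial_character_not_annihilates_dense:
  fixes l :: "'a::{topological_space, ab_group_add} \<Rightarrow> real"
  assumes "compact (UNIV :: 'a set)" and "length_function l" and "continuous_on UNIV l"
    and "c \<in> dual_group" and "c \<noteq> (\<lambda>_. 1)"
  shows "\<exists>\<delta>>0. \<forall>H. (\<forall>g. \<exists>a\<in>H. dist_l l a g < \<delta>) \<longrightarrow> c \<notin> annihilator H"
proof -
  have c: "is_character c" using assms(4) unfolding dual_group_def by simp
  obtain g where "c g \<noteq> 1" using assms(5) by auto
  define U where "U = {x. c x \<noteq> c g}"
  have "open U"
    using c unfolding U_def is_character_def by (intro open_Collect_neq continuous_intros) auto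
  moreover have "0 < l x" if "x \<notin> U" for x
  proof -
    have "x \<noteq> 0" using that character_zero[OF c] \<open>c g \<noteq> 1\<close> unfolding U_def by auto
    then show ?thesis
      using assms(2) unfolding length_function_def by (simp add: less_le)
  qed
  ultimately obtain \<delta> where "0 < \<delta>" and "\<And>x. l x < \<delta> \<Longrightarrow> x \<in> U"
    using compact_space_small_values_in_open[OF assms(1,3)] by blast
  then have small: "c x \<noteq> c g" if "l x < \<delta>" for x
    using that unfolding U_def by blast
  show ?thesis
  proof (intro exI[of _ \<delta>] conjI allI impI \<open>0 < \<delta>\<close>)
    fix H assume "\<forall>g. \<exists>a\<in>H. dist_l l a g < \<delta>"
    then obtain a where "a \<in> H" and "l (- a + g) < \<delta>"
      unfolding dist_l_def by blast
    have "c (a + (- a + g)) = c a * c (- a + g)"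
      using c unfolding is_character_def by blast
    then have "c g = c a * c (- a + g)" by simp
    then have "c a \<noteq> 1" using small[OF \<open>l (- a + g) < \<delta>\<close>] by auto
    then show "c \<notin> annihilator H" using \<open>a \<in> H\<close> unfolding annihilator_def by blast
  qed
qed

lemma eventually_not_in_annihilator:
  fixes l :: "'a::{topological_space, ab_group_add} \<Rightarrow> real"
  assumes "compact (UNIV :: 'a set)" and "length_function l" and "continuous_on UNIV l"
    and "\<And>n. H n \<noteq> {}" and "(\<lambda>n. hausdorff_dist_l l (H n) UNIV) \<longlonglongrightarrow> 0"
    and "c \<in> dual_group" and "c \<noteq> (\<lambda>_. 1)"
  shows "eventually (\<lambda>n. c \<notin> annihilator (H n)) sequentially"
proof -
  obtain \<delta> where "0 < \<delta>"
    and dense: "\<forall>H. (\<forall>g. \<exists>a\<in>H. dist_l l a g < \<delta>) \<longrightarrow> c \<notin> annihilator H"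
    using nontrivial_character_not_annihilates_dense[OF assms(1-3,6,7)] by blast
  have "compact (range l)"
    by (rule compact_continuous_image[OF assms(3,1)])
  then have l_bdd: "bdd_above (range l)"
    by (intro bounded_imp_bdd_above compact_imp_bounded)
  have l_nonneg: "0 \<le> l x" for x
    using assms(2) unfolding length_function_def by blast
  have close: "\<forall>g. \<exists>a\<in>H n. dist_l l a g < \<delta>"
    if "hausdorff_dist_l l (H n) UNIV < \<delta>" for n
    using hausdorff_dist_l_less_imp_close[OF l_nonneg l_bdd assms(4) UNIV_I that] by blast
  show ?thesis
    using order_tendstoD(2)[OF assms(5) \<open>0 < \<delta>\<close>]
    by eventually_elim (use dense close in blast)
qed

theorem mainTheorem9:
  fixes l :: "'a::{topological_ab_group_add, t2_space} \<Rightarrow> real"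
    and H :: "nat \<Rightarrow> 'a set"
    and F :: "('a \<Rightarrow> complex) set"
  assumes "compact (UNIV :: 'a set)"
    and "length_function l" and "continuous_on UNIV l"
    and "\<And>n. closed (H n)" and "\<And>n. is_subgroup (H n)"
    and "(\<lambda>n. hausdorff_dist_l l (H n) UNIV) \<longlonglongrightarrow> 0"
    and "finite F" and "F \<subseteq> dual_group - {(\<lambda>_. 1)}"
  shows "\<exists>N. \<forall>n\<ge>N. annihilator (H n) \<inter> F = {}"
proof -
  have nonempty: "H n \<noteq> {}" for n
    using assms(5) unfolding is_subgroup_def by blast
  have "\<forall>c\<in>F. eventually (\<lambda>n. c \<notin> annihilator (H n)) sequentially"
  proof
    fix c assume "c \<in> F"
    with assms(8) have "c \<in> dual_group" and "c \<noteq> (\<lambda>_. 1)" by auto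
    then show "eventually (\<lambda>n. c \<notin> annihilator (H n)) sequentially"
      by (rule eventually_not_in_annihilator[OF assms(1-3) nonempty assms(6)])
  qed
  then have "eventually (\<lambda>n. \<forall>c\<in>F. c \<notin> annihilator (H n)) sequentially"
    by (rule eventually_ball_finite[OF assms(7)])
  then obtain N where "\<forall>n\<ge>N. \<forall>c\<in>F. c \<notin> annihilator (H n)"
    unfolding eventually_sequentially by blast
  then show ?thesis by blast
qed

end
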